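(* There exists a data structure for the dynamic variant of Disjoint Factors with $k=2$ that supports updates and queries in amortized time $\mathcal{O}(1)$.
   Context: Disjoint Factors with $k=2$: given $w\in\{1,2\}^\star$, decide whether there exist disjoint (contiguous) subwords $w_1,w_2$ of $w$, each of length at least $2$, with $w_i$ beginning and ending with symbol $i$. Dynamic variant: a data structure maintaining $w$ under updates replacing single symbols and answering whether the current word is a yes-instance. Word-RAM model. *)

theory Defs
  imports Main
begin

text \<open>Words over the alphabet {1,2} are lists of naturals with entries 1 or 2 (positions 0-indexed).
  A contiguous subword of length at least 2 beginning and ending with symbol s is given by
  positions i < j with w!i = s and w!j = s; two such subwords are disjoint iff their
  position intervals are disjoint.\<close>

definition DF2 :: "nat list \<Rightarrow> bool" where
  "DF2 u \<longleftrightarrow> (\<exists>i j p q. i < j \<and> j < length u \<and> p < q \<and> q < length u \<and>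
      u ! i = 1 \<and> u ! j = 1 \<and> u ! p = 2 \<and> u ! q = 2 \<and> (j < p \<or> q < i))"

text \<open>Memory is a map from addresses to words (naturals below 2^w). Instruction operands
  are (constant) memory addresses; Load/Store provide indirect addressing.\<close>

datatype instr =
    Const nat nat
  | Add nat nat nat
  | Sub nat nat nat          \<comment> \<open>M[a] := (M[b] - M[c]) mod 2^w (wrap-around)\<close>
  | Mul nat nat nat
  | Div nat nat nat
  | BAnd nat nat nat
  | BOr nat nat nat
  | BXor nat nat nat
  | Shl nat nat nat
  | Shr nat nat nat
  | Lt nat nat nat
  | Load nat nat
  | Store nat nat
  | Jz nat nat
  | Jmp nat
  | Halt

type_synonym mem = "nat \<Rightarrow> nat"
type_synonym rstate = "nat \<times> mem"

definition halted :: "instr list \<Rightarrow> rstate \<Rightarrow> bool" where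
  "halted P s \<longleftrightarrow> fst s \<ge> length P \<or> P ! fst s = Halt"

fun exec_instr :: "nat \<Rightarrow> instr \<Rightarrow> rstate \<Rightarrow> rstate" where
  "exec_instr w (Const a k) (pc, M) = (Suc pc, M(a := k mod 2^w))"
| "exec_instr w (Add a b c) (pc, M) = (Suc pc, M(a := (M b + M c) mod 2^w))"
| "exec_instr w (Sub a b c) (pc, M) = (Suc pc, M(a := (M b + (2^w - M c mod 2^w)) mod 2^w))"
| "exec_instr w (Mul a b c) (pc, M) = (Suc pc, M(a := (M b * M c) mod 2^w))"
| "exec_instr w (Div a b c) (pc, M) = (Suc pc, M(a := M b div M c))"
| "exec_instr w (BAnd a b c) (pc, M) = (Suc pc, M(a := and (M b) (M c)))"
| "exec_instr w (BOr a b c) (pc, M) = (Suc pc, M(a := or (M b) (M c)))"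
| "exec_instr w (BXor a b c) (pc, M) = (Suc pc, M(a := xor (M b) (M c)))"
| "exec_instr w (Shl a b c) (pc, M) = (Suc pc, M(a := (M b * 2 ^ M c) mod 2^w))"
| "exec_instr w (Shr a b c) (pc, M) = (Suc pc, M(a := M b div 2 ^ M c))"
| "exec_instr w (Lt a b c) (pc, M) = (Suc pc, M(a := (if M b < M c then 1 else 0)))"
| "exec_instr w (Load a b) (pc, M) = (Suc pc, M(a := M (M b)))"
| "exec_instr w (Store a b) (pc, M) = (Suc pc, M(M a := M b))"
| "exec_instr w (Jz a t) (pc, M) = (if M a = 0 then (t, M) else (Suc pc, M))"
| "exec_instr w (Jmp t) (pc, M) = (t, M)"
| "exec_instr w Halt (pc, M) = (pc, M)"

definition step :: "instr list \<Rightarrow> nat \<Rightarrow> rstate \<Rightarrow> rstate" where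
  "step P w s = (if halted P s then s else exec_instr w (P ! fst s) s)"

definition runs_in :: "instr list \<Rightarrow> nat \<Rightarrow> mem \<Rightarrow> nat \<Rightarrow> mem \<Rightarrow> bool" where
  "runs_in P w M t M' \<longleftrightarrow>
     (let s = (step P w ^^ t) (0, M) in halted P s \<and> snd s = M')"

datatype op = Upd nat nat | Qry

definition valid_op :: "nat \<Rightarrow> op \<Rightarrow> bool" where
  "valid_op n o' \<longleftrightarrow> (case o' of Upd i a \<Rightarrow> i < n \<and> a \<in> {1, 2} | Qry \<Rightarrow> True)"

text \<open>Initial memory on input word u: cell 0 holds n = length u, cells 1,2 are 0 (I/O cells),
  cell 3+i holds u!i, all other cells 0.\<close>
definition init_mem :: "nat list \<Rightarrow> mem" where
  "init_mem u = (\<lambda>x. if x = 0 then length u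
                      else if 3 \<le> x \<and> x - 3 < length u then u ! (x - 3) else 0)"

text \<open>An update (Upd i a) writes i to cell 1 and a to cell 2 and runs Pu;
  a query runs Pq and the answer is read off cell 0 (nonzero = yes), which must equal DF2 u.\<close>
inductive serve :: "instr list \<Rightarrow> instr list \<Rightarrow> nat \<Rightarrow> mem \<Rightarrow> nat list \<Rightarrow> op list \<Rightarrow> nat \<Rightarrow> bool"
  for Pu Pq w where
  serve_nil: "serve Pu Pq w M u [] 0"
| serve_upd: "runs_in Pu w (M(1 := i, 2 := a)) t M' \<Longrightarrow> serve Pu Pq w M' (u[i := a]) ops T
     \<Longrightarrow> serve Pu Pq w M u (Upd i a # ops) (t + T)"
| serve_qry: "runs_in Pq w M t M' \<Longrightarrow> (M' 0 \<noteq> 0) = DF2 u \<Longrightarrow> serve Pu Pq w M' u ops T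
     \<Longrightarrow> serve Pu Pq w M u (Qry # ops) (t + T)"

end

theory Submission
  imports Defs
begin

text \<open>A word over \<open>{1, 2}\<close> has the two disjoint factors iff some cut leaves two equal letters
  on one side and two copies of the other letter on the other side. In terms of the letter counts
  \<open>c\<^sub>1, c\<^sub>2\<close> this happens iff both are at least 2 and either both are at least 3 (cut after the
  first three letters: one letter occurs there twice, the other at most once) or the word begins
  or ends with two equal letters (if, say, \<open>c\<^sub>1 = 2\<close>, both 1s lie on one side of the cut and the
  other side consists of 2s only). So it suffices to store the length and the number of 1s next
  to the word: an update changes the count by at most one, and a query inspects the two counts
  and the four letters at the ends, each in a constant number of RAM steps, after a linear-time
  initialisation that counts the 1s.\<close>

section \<open>Disjoint factors via letter counts\<close>

lemma two_le_count_list_iff: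
  "2 \<le> count_list xs a \<longleftrightarrow> (\<exists>i j. i < j \<and> j < length xs \<and> xs ! i = a \<and> xs ! j = a)"
proof -
  let ?I = "{i. i < length xs \<and> xs ! i = a}"
  have "count_list xs a = card ?I"
    by (simp add: count_list_eq_length_filter length_filter_conv_card eq_commute)
  moreover have "2 \<le> card ?I \<longleftrightarrow> (\<exists>i\<in>?I. \<exists>j\<in>?I. i < j)"
    using card_le_Suc0_iff_eq[of ?I] by (auto, metis linorder_neqE_nat)
  ultimately show ?thesis by (auto dest: order.strict_trans)
qed

definition pair_before_pair :: "'a list \<Rightarrow> 'a \<Rightarrow> 'a \<Rightarrow> bool" where
  "pair_before_pair u a b \<longleftrightarrow> (\<exists>k. 2 \<le> count_list (take k u) a \<and> 2 \<le> count_list (drop k u) b)"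

lemma pair_before_pair_iff_positions:
  "pair_before_pair u a b \<longleftrightarrow>
     (\<exists>i j p q. i < j \<and> j < p \<and> p < q \<and> q < length u \<and>
        u ! i = a \<and> u ! j = a \<and> u ! p = b \<and> u ! q = b)"
  (is "_ \<longleftrightarrow> ?positions")
proof
  assume "pair_before_pair u a b"
  then obtain k i j p q where "i < j" "j < length (take k u)" "take k u ! i = a" "take k u ! j = a"
    "p < q" "q < length (drop k u)" "drop k u ! p = b" "drop k u ! q = b"
    unfolding pair_before_pair_def two_le_count_list_iff by blast
  then show ?positions
    by (intro exI[of _ i] exI[of _ j] exI[of _ "k + p"] exI[of _ "k + q"]) auto
next
  assume ?positions
  then obtain i j p q where "i < j" "j < p" "p < q" "q < length u"
    and "u ! i = a" "u ! j = a" "u ! p = b" "u ! q = b"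
    by blast
  then have "2 \<le> count_list (take p u) a"
    unfolding two_le_count_list_iff by (intro exI[of _ i] exI[of _ j]) simp
  moreover have "2 \<le> count_list (drop p u) b"
    unfolding two_le_count_list_iff using \<open>p < q\<close> \<open>q < length u\<close> \<open>u ! p = b\<close> \<open>u ! q = b\<close>
    by (intro exI[of _ 0] exI[of _ "q - p"]) simp
  ultimately show "pair_before_pair u a b"
    unfolding pair_before_pair_def by blast
qed

lemma DF2_iff_pair_before_pair: "DF2 u \<longleftrightarrow> pair_before_pair u 1 2 \<or> pair_before_pair u 2 1"
  unfolding DF2_def pair_before_pair_iff_positions
  by (rule iffI; elim exE conjE disjE; blast dest: order.strict_trans)

lemma count_list_take_drop: "count_list u a = count_list (take k u) a + count_list (drop k u) a"
  by (metis append_take_drop_id count_list_append)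

lemma count_list_take_Suc:
  "i < length u \<Longrightarrow>
    count_list (take (Suc i) u) x = count_list (take i u) x + (if u ! i = x then 1 else 0)"
  by (simp add: take_Suc_conv_app_nth)

lemma count_list_update:
  assumes "i < length u"
  shows "count_list (u[i := a]) x + (if u ! i = x then 1 else 0) =
    count_list u x + (if a = x then 1 else 0)"
proof -
  have "count_list (u[i := a]) x =
      count_list (take i u) x + (if a = x then 1 else 0) + count_list (drop (Suc i) u) x"
    using assms by (simp add: upd_conv_take_nth_drop)
  moreover have "count_list u x =
      count_list (take i u) x + (if u ! i = x then 1 else 0) + count_list (drop (Suc i) u) x"
    using count_list_take_drop[of u x i] by (simp add: Cons_nth_drop_Suc[OF assms, symmetric])
  ultimately show ?thesis
    by simp
qed

lemma count_list_two_letters: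
  "set u \<subseteq> {a, b} \<Longrightarrow> a \<noteq> b \<Longrightarrow> count_list u a + count_list u b = length u"
  using sum_count_set[of u "{a, b}"] by simp

lemma pair_before_pair_by_prefix:
  assumes "2 \<le> count_list (take k u) a" and "count_list (take k u) b + 2 \<le> count_list u b"
  shows "pair_before_pair u a b"
  using assms count_list_take_drop[of u b k] unfolding pair_before_pair_def by auto

lemma pair_before_pair_by_suffix:
  assumes "2 \<le> count_list (drop k u) b" and "count_list (drop k u) a + 2 \<le> count_list u a"
  shows "pair_before_pair u a b"
  using assms count_list_take_drop[of u a k] unfolding pair_before_pair_def by auto

lemma pair_before_pair_if_starts_with_pair:
  assumes "set u \<subseteq> {a, b}" "a \<noteq> b" "u ! 0 = a" "u ! 1 = a" "2 \<le> count_list u b"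
  shows "pair_before_pair u a b"
proof (rule pair_before_pair_by_prefix)
  have "u \<noteq> []"
    using assms count_le_length[of u b] by auto
  then have "count_list u a \<noteq> 0"
    using assms nth_mem[of 0 u] by (simp add: count_list_0_iff)
  then have "2 \<le> length u"
    using assms count_list_two_letters[of u a b] by linarith
  then show "2 \<le> count_list (take 2 u) a"
    unfolding two_le_count_list_iff using assms by (intro exI[of _ 0] exI[of _ 1]) simp
  moreover have "count_list (take 2 u) a + count_list (take 2 u) b = 2"
    using count_list_two_letters[of "take 2 u" a b] assms set_take_subset[of 2 u] \<open>2 \<le> length u\<close>
    by simp
  ultimately show "count_list (take 2 u) b + 2 \<le> count_list u b"
    using assms by simp
qed

lemma pair_before_pair_if_ends_with_pair:
  assumes "set u \<subseteq> {a, b}" "a \<noteq> b" "u ! (length u - 2) = b" "u ! (length u - 1) = b"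
    and "2 \<le> count_list u a"
  shows "pair_before_pair u a b"
proof (rule pair_before_pair_by_suffix)
  have "u \<noteq> []"
    using assms count_le_length[of u a] by auto
  then have "count_list u b \<noteq> 0"
    using assms nth_mem[of "length u - 1" u] by (simp add: count_list_0_iff)
  then have "2 \<le> length u"
    using assms count_list_two_letters[of u a b] by linarith
  then show "2 \<le> count_list (drop (length u - 2) u) b"
    unfolding two_le_count_list_iff using assms
    by (intro exI[of _ 0] exI[of _ 1]) (simp add: Suc_diff_Suc numeral_2_eq_2)
  moreover have "count_list (drop (length u - 2) u) a + count_list (drop (length u - 2) u) b = 2"
    using count_list_two_letters[of "drop (length u - 2) u" a b] assms
      set_drop_subset[of "length u - 2" u] \<open>2 \<le> length u\<close>
    by simp
  ultimately show "count_list (drop (length u - 2) u) a + 2 \<le> count_list u a"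
    using assms by simp
qed

lemma pair_before_pair_if_three_each:
  assumes "set u \<subseteq> {a, b}" "a \<noteq> b" "3 \<le> count_list u a" "3 \<le> count_list u b"
  shows "pair_before_pair u a b \<or> pair_before_pair u b a"
proof -
  have "3 \<le> length u"
    using assms count_list_two_letters[of u a b] by linarith
  then have "count_list (take 3 u) a + count_list (take 3 u) b = 3"
    using count_list_two_letters[of "take 3 u" a b] assms set_take_subset[of 3 u] by simp
  then show ?thesis
    using assms pair_before_pair_by_prefix[of 3 u a b] pair_before_pair_by_prefix[of 3 u b a]
    by linarith
qed

lemma pair_before_pair_imp_counts:
  assumes "pair_before_pair u a b" "set u \<subseteq> {a, b}" "a \<noteq> b"
  shows "2 \<le> count_list u a \<and> 2 \<le> count_list u b \<and>
    (3 \<le> count_list u a \<and> 3 \<le> count_list u b \<or>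
     u ! 0 = u ! 1 \<or> u ! (length u - 2) = u ! (length u - 1))"
proof -
  obtain k where pre: "2 \<le> count_list (take k u) a" and suf: "2 \<le> count_list (drop k u) b"
    using assms(1) unfolding pair_before_pair_def by blast
  have a2: "2 \<le> count_list u a" and b2: "2 \<le> count_list u b"
    using pre suf count_list_take_drop[of u a k] count_list_take_drop[of u b k] by linarith+
  consider "3 \<le> count_list u a \<and> 3 \<le> count_list u b" | "count_list u a = 2" | "count_list u b = 2"
    using a2 b2 by linarith
  then show ?thesis
  proof cases
    case 2
    then have "count_list (drop k u) a = 0"
      using pre count_list_take_drop[of u a k] by linarith
    then have "set (drop k u) \<subseteq> {b}"
      using assms(2) set_drop_subset[of k u] by (auto simp: count_list_0_iff)
    moreover have "2 \<le> length (drop k u)"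
      using suf count_le_length[of "drop k u" b] by linarith
    ultimately have "u ! (length u - 2) = b" "u ! (length u - 1) = b"
      using nth_mem[of "length u - 2 - k" "drop k u"] nth_mem[of "length u - 1 - k" "drop k u"]
      by (auto simp: subset_iff)
    then show ?thesis using a2 b2 by simp
  next
    case 3
    then have "count_list (take k u) b = 0"
      using suf count_list_take_drop[of u b k] by linarith
    then have "set (take k u) \<subseteq> {a}"
      using assms(2) set_take_subset[of k u] by (auto simp: count_list_0_iff)
    moreover have "2 \<le> length (take k u)"
      using pre count_le_length[of "take k u" a] by linarith
    moreover have "u \<noteq> []"
      using \<open>2 \<le> length (take k u)\<close> by auto
    ultimately have "u ! 0 = a" "u ! 1 = a"
      using nth_mem[of 0 "take k u"] nth_mem[of 1 "take k u"] by (auto simp: subset_iff)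
    then show ?thesis using a2 b2 by simp
  qed (use a2 b2 in simp)
qed

lemma pair_before_pair_either_iff_counts:
  assumes "set u \<subseteq> {a, b}" "a \<noteq> b"
  shows "pair_before_pair u a b \<or> pair_before_pair u b a \<longleftrightarrow>
    2 \<le> count_list u a \<and> 2 \<le> count_list u b \<and>
    (3 \<le> count_list u a \<and> 3 \<le> count_list u b \<or>
     u ! 0 = u ! 1 \<or> u ! (length u - 2) = u ! (length u - 1))"
    (is "?pairs \<longleftrightarrow> 2 \<le> ?ca \<and> 2 \<le> ?cb \<and> ?rest")
proof -
  have swapped: "set u \<subseteq> {b, a}" "b \<noteq> a"
    using assms by auto
  have "?pairs" if counts: "2 \<le> ?ca" "2 \<le> ?cb" ?rest
  proof -
    have "4 \<le> length u"
      using counts count_list_two_letters[OF assms] by linarith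
    then have "u ! 0 \<in> set u" "u ! (length u - 1) \<in> set u"
      by (auto intro!: nth_mem)
    then have first: "u ! 0 \<in> {a, b}" and last: "u ! (length u - 1) \<in> {a, b}"
      using assms(1) by blast+
    from \<open>?rest\<close> consider "3 \<le> ?ca \<and> 3 \<le> ?cb" | "u ! 0 = u ! 1"
      | "u ! (length u - 2) = u ! (length u - 1)"
      by argo
    then show ?pairs
    proof cases
      case 1
      then show ?thesis using pair_before_pair_if_three_each[OF assms] by blast
    next
      case 2
      then show ?thesis
        using first counts pair_before_pair_if_starts_with_pair[OF assms]
          pair_before_pair_if_starts_with_pair[OF swapped] by auto
    next
      case 3
      then show ?thesis
        using last counts pair_before_pair_if_ends_with_pair[OF assms]
          pair_before_pair_if_ends_with_pair[OF swapped] by auto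
    qed
  qed
  then show ?thesis
    using pair_before_pair_imp_counts[OF _ assms] pair_before_pair_imp_counts[OF _ swapped] by blast
qed

theorem DF2_iff_counts:
  assumes "set u \<subseteq> {1, 2}"
  shows "DF2 u \<longleftrightarrow> 2 \<le> count_list u 1 \<and> 2 \<le> length u - count_list u 1 \<and>
    (3 \<le> count_list u 1 \<and> 3 \<le> length u - count_list u 1 \<or>
     u ! 0 = u ! 1 \<or> u ! (length u - 2) = u ! (length u - 1))"
proof -
  have "length u - count_list u 1 = count_list u 2"
    using count_list_two_letters[OF assms] by simp
  then show ?thesis
    using DF2_iff_pair_before_pair pair_before_pair_either_iff_counts[OF assms] by simp
qed

lemma funpow_numeral_unfold: "(f ^^ numeral k) x = (f ^^ pred_numeral k) (f x)"
  by (simp only: numeral_eq_Suc funpow_Suc_right o_apply)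

lemma funpow_one_apply: "((f :: 'a \<Rightarrow> 'a) ^^ 1) x = f x"
  by simp

lemma exec_Sub_no_wrap:
  assumes "M c \<le> M b" "M b < 2 ^ w"
  shows "exec_instr w (Sub a b c) (pc, M) = (Suc pc, M(a := M b - M c))"
proof -
  have "M b + (2 ^ w - M c mod 2 ^ w) = (M b - M c) + 2 ^ w"
    using assms by simp
  moreover have "M b - M c < 2 ^ w"
    using assms by linarith
  ultimately show ?thesis
    by simp
qed

lemmas run_simps = step_def halted_def funpow_numeral_unfold funpow_one_apply

lemma step_funpow_halted: "halted P s \<Longrightarrow> (step P w ^^ k) s = s"
  by (induction k) (auto simp: step_def)

lemma runs_in_if_halted_within:
  assumes "(step P w ^^ t) (0, M) = s" "halted P s" "t \<le> t'"
  shows "runs_in P w M t' (snd s)"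
proof -
  have "(step P w ^^ t') (0, M) = (step P w ^^ (t' - t)) ((step P w ^^ t) (0, M))"
    using assms(3) by (simp flip: funpow_add o_apply[of "step P w ^^ (t' - t)"])
  then show ?thesis
    using assms step_funpow_halted by (simp add: runs_in_def)
qed

section \<open>The data structure\<close>

text \<open>The word stays where the initial memory put it, except that its first two letters,
  whose cells 3 and 4 are taken over by the length and the number of 1s, are moved
  just above it. No cell beyond \<open>n + 6\<close> is ever used, hence the word-size hypothesis
  \<open>n + 6 < 2 ^ w\<close> below.\<close>

definition word_cell :: "nat \<Rightarrow> nat \<Rightarrow> nat" where
  "word_cell n i = (if i < 2 then n + 5 + i else 3 + i)"

definition represents :: "nat \<Rightarrow> nat list \<Rightarrow> mem \<Rightarrow> bool" where
  "represents n u M \<longleftrightarrow> length u = n \<and> set u \<subseteq> {1, 2} \<and> M 3 = n \<and> M 4 = count_list u 1 \<and>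
     (\<forall>i<n. M (word_cell n i) = u ! i)"

lemma word_cell_ge: "5 \<le> word_cell n i"
  by (simp add: word_cell_def)

lemma word_cell_inj: "i < n \<Longrightarrow> j < n \<Longrightarrow> word_cell n i = word_cell n j \<Longrightarrow> i = j"
  by (auto simp: word_cell_def split: if_splits)

text \<open>Cells 0 to 2 are scratch; the first eight instructions compute
  \<open>word_cell n i = i + [i < 2] * (n + 2) + 3\<close> into cell 1.\<close>

definition update_prog :: "instr list" where
  "update_prog = [Const 0 2, Lt 0 1 0, Add 1 1 0, Add 1 1 0, Mul 0 0 3, Add 1 1 0,
     Const 0 3, Add 1 1 0, Load 0 1, Store 1 2,
     Const 1 2, Lt 0 0 1, Lt 2 2 1, Add 4 4 2, Sub 4 4 0, Halt]"

lemma update_prog_run: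
  assumes "n + 6 < 2 ^ w" "i < n" "M 3 = n" "M 4 \<le> n" "a = 1 \<or> a = 2"
    and old: "M (word_cell n i) = 1 \<or> M (word_cell n i) = 2" "M (word_cell n i) = 1 \<Longrightarrow> 1 \<le> M 4"
  shows "\<exists>M'. (step update_prog w ^^ 15) (0, M(1 := i, 2 := a)) = (15, M') \<and> M' (word_cell n i) = a
     \<and> M' 4 = M 4 + (if a = 1 then 1 else 0) - (if M (word_cell n i) = 1 then 1 else 0)
     \<and> (\<forall>x. 3 \<le> x \<longrightarrow> x \<noteq> 4 \<longrightarrow> x \<noteq> word_cell n i \<longrightarrow> M' x = M x)"
proof (cases "i < 2")
  case True
  then have cell: "word_cell n i = n + 5 + i"
    by (simp add: word_cell_def)
  show ?thesis
    using assms True unfolding cell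
    by (elim disjE; simp add: run_simps update_prog_def exec_Sub_no_wrap
        add.assoc add.commute add.left_commute del: exec_instr.simps(3))
next
  case False
  then have cell: "word_cell n i = 3 + i"
    by (simp add: word_cell_def)
  show ?thesis
    using assms False unfolding cell
    by (elim disjE; simp add: run_simps update_prog_def exec_Sub_no_wrap
        add.assoc add.commute add.left_commute del: exec_instr.simps(3))
qed

lemma update_prog_correct:
  assumes "n + 6 < 2 ^ w" "represents n u M" "i < n" "a \<in> {1, 2}"
  shows "\<exists>M'. runs_in update_prog w (M(1 := i, 2 := a)) 40 M' \<and> represents n (u[i := a]) M'"
proof -
  from assms(2) have "length u = n" "set u \<subseteq> {1, 2}" "M 3 = n" "M 4 = count_list u 1"
    and word: "\<forall>j<n. M (word_cell n j) = u ! j"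
    by (auto simp: represents_def)
  moreover have old: "M (word_cell n i) = u ! i" "u ! i \<in> set u"
    using word assms(3) \<open>length u = n\<close> by auto
  moreover have "u ! i = 1 \<or> u ! i = 2"
    using old(2) \<open>set u \<subseteq> {1, 2}\<close> by blast
  moreover have "count_list u 1 \<noteq> 0" if "u ! i = 1"
    using that old(2) by (simp add: count_list_0_iff)
  moreover note count_le_length[of u 1]
  ultimately obtain M' where run: "(step update_prog w ^^ 15) (0, M(1 := i, 2 := a)) = (15, M')"
    and new: "M' (word_cell n i) = a"
    and count: "M' 4 = M 4 + (if a = 1 then 1 else 0) - (if M (word_cell n i) = 1 then 1 else 0)"
    and others: "\<forall>x. 3 \<le> x \<longrightarrow> x \<noteq> 4 \<longrightarrow> x \<noteq> word_cell n i \<longrightarrow> M' x = M x"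
    using update_prog_run[OF assms(1,3), of M a] assms(4) by auto
  have "runs_in update_prog w (M(1 := i, 2 := a)) 40 M'"
    using runs_in_if_halted_within[OF run] by (simp add: halted_def update_prog_def)
  moreover have "represents n (u[i := a]) M'"
    unfolding represents_def
  proof (intro conjI allI impI)
    show "length (u[i := a]) = n" "set (u[i := a]) \<subseteq> {1, 2}"
      using \<open>length u = n\<close> \<open>set u \<subseteq> {1, 2}\<close> assms(4) set_update_subset_insert[of u i a] by auto
    show "M' 3 = n"
      using others word_cell_ge[of n i] \<open>M 3 = n\<close> by simp
    show "M' 4 = count_list (u[i := a]) 1"
      using count old \<open>M 4 = count_list u 1\<close> count_list_update[of i u a 1] assms(3) \<open>length u = n\<close>
      by simp
    show "M' (word_cell n j) = u[i := a] ! j" if "j < n" for j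
    proof (cases "j = i")
      case True
      then show ?thesis
        using new assms(3) \<open>length u = n\<close> by simp
    next
      case False
      then have "word_cell n j \<noteq> word_cell n i"
        using word_cell_inj that assms(3) by blast
      then show ?thesis
        using others word_cell_ge[of n j] word that False by simp
    qed
  qed
  ultimately show ?thesis
    by blast
qed

text \<open>The program evaluates the criterion of \<open>DF2_iff_counts\<close>. It compares the letters at the
  ends only once both counts are at least 2; then \<open>n \<ge> 4\<close>, so \<open>u ! (n - 2)\<close>, \<open>u ! (n - 1)\<close>,
  \<open>u ! 0\<close>, \<open>u ! 1\<close> sit in cells \<open>n + 1\<close>, \<open>n + 2\<close>, \<open>n + 5\<close>, \<open>n + 6\<close>.\<close>

definition query_prog :: "instr list" where
  "query_prog = [Const 0 2, Lt 1 4 0, Jz 1 4, Jmp 36, Sub 1 3 4, Lt 2 1 0, Jz 2 8, Jmp 36,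
     Const 0 3, Lt 2 4 0, Lt 1 1 0, Add 2 2 1, Jz 2 34,
     Const 0 5, Add 0 3 0, Load 0 0, Const 1 6, Add 1 3 1, Load 1 1,
     Lt 2 0 1, Lt 0 1 0, Add 0 0 2, Jz 0 34,
     Const 0 1, Add 0 3 0, Load 0 0, Const 1 2, Add 1 3 1, Load 1 1,
     Lt 2 0 1, Lt 0 1 0, Add 0 0 2, Jz 0 34,
     Jmp 36, Const 0 1, Halt, Const 0 0, Halt]"

lemma query_prog_run:
  assumes "n + 6 < 2 ^ w" "M 3 = n" "M 4 \<le> n"
  shows "\<exists>pc M'. (step query_prog w ^^ 40) (0, M) = (pc, M') \<and> halted query_prog (pc, M') \<and>
     (M' 0 \<noteq> 0 \<longleftrightarrow> 2 \<le> M 4 \<and> 2 \<le> n - M 4 \<and>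
        (3 \<le> M 4 \<and> 3 \<le> n - M 4 \<or> M (n + 5) = M (n + 6) \<or> M (n + 1) = M (n + 2)))
     \<and> (\<forall>x. 3 \<le> x \<longrightarrow> M' x = M x)"
proof -
  have "0 < w"
    using assms(1) by (cases w) auto
  consider "M 4 < 2" | "2 \<le> M 4 \<and> n - M 4 < 2" | "3 \<le> M 4 \<and> 3 \<le> n - M 4"
    | "M 4 = 2 \<and> 2 \<le> n - M 4 \<or> 3 \<le> M 4 \<and> n - M 4 = 2"
    by linarith
  then show ?thesis
  proof cases
    case 4
    then show ?thesis using assms \<open>0 < w\<close>
      by (elim disjE; cases rule: linorder_cases[of "M (n + 5)" "M (n + 6)"];
          cases rule: linorder_cases[of "M (n + 1)" "M (n + 2)"];
          simp add: run_simps query_prog_def exec_Sub_no_wrap del: exec_instr.simps(3))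
  qed (use assms \<open>0 < w\<close> in
      \<open>simp add: run_simps query_prog_def exec_Sub_no_wrap del: exec_instr.simps(3)\<close>)+
qed

lemma query_prog_correct:
  assumes "n + 6 < 2 ^ w" "represents n u M"
  shows "\<exists>M'. runs_in query_prog w M 40 M' \<and> (M' 0 \<noteq> 0 \<longleftrightarrow> DF2 u) \<and> represents n u M'"
proof -
  from assms(2) have "length u = n" "set u \<subseteq> {1, 2}" "M 3 = n" "M 4 = count_list u 1"
    and word: "\<forall>j<n. M (word_cell n j) = u ! j"
    by (auto simp: represents_def)
  have "M 4 \<le> n"
    using \<open>M 4 = count_list u 1\<close> \<open>length u = n\<close> count_le_length[of u 1] by simp
  then obtain pc M' where run: "(step query_prog w ^^ 40) (0, M) = (pc, M')"
      "halted query_prog (pc, M')"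
    and answer: "M' 0 \<noteq> 0 \<longleftrightarrow> 2 \<le> M 4 \<and> 2 \<le> n - M 4 \<and>
        (3 \<le> M 4 \<and> 3 \<le> n - M 4 \<or> M (n + 5) = M (n + 6) \<or> M (n + 1) = M (n + 2))"
    and unchanged: "\<forall>x. 3 \<le> x \<longrightarrow> M' x = M x"
    using query_prog_run[of n w M] assms(1) \<open>M 3 = n\<close> by blast
  have "runs_in query_prog w M 40 M'"
    using runs_in_if_halted_within[OF run] by simp
  moreover have "M' 0 \<noteq> 0 \<longleftrightarrow> DF2 u"
  proof -
    have "M (n + 5) = u ! 0 \<and> M (n + 6) = u ! 1 \<and> M (n + 1) = u ! (n - 2) \<and> M (n + 2) = u ! (n - 1)"
      if "2 \<le> M 4" "2 \<le> n - M 4"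
    proof -
      have "4 \<le> n"
        using that by linarith
      then have "word_cell n 0 = n + 5" "word_cell n 1 = n + 6"
        "word_cell n (n - 2) = n + 1" "word_cell n (n - 1) = n + 2"
        by (simp_all add: word_cell_def)
      then show ?thesis
        using word[rule_format, of 0] word[rule_format, of 1] word[rule_format, of "n - 2"]
          word[rule_format, of "n - 1"] \<open>4 \<le> n\<close>
        by simp
    qed
    then show ?thesis
      using answer DF2_iff_counts[OF \<open>set u \<subseteq> {1, 2}\<close>] \<open>length u = n\<close> \<open>M 4 = count_list u 1\<close>
      by auto
  qed
  moreover have "represents n u M'"
  proof -
    have "M' (word_cell n i) = M (word_cell n i)" for i
      using unchanged word_cell_ge[of n i] by simp
    then show ?thesis
      using assms(2) unchanged by (simp add: represents_def)
  qed
  ultimately show ?thesis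
    by blast
qed

text \<open>The prologue moves \<open>u ! 0\<close>, \<open>u ! 1\<close> out of cells 3, 4 and initialises cell 3 to \<open>n\<close>
  and the counter (cell 4) and loop index (cell 2) to 0; the loop at instruction 14 spends
  17 steps per letter.\<close>

definition init_prog :: "instr list" where
  "init_prog = [Const 1 5, Add 1 0 1, Const 2 3, Load 2 2, Store 1 2,
     Const 1 6, Add 1 0 1, Const 2 4, Load 2 2, Store 1 2,
     Const 1 0, Add 3 0 1, Const 4 0, Const 2 0,
     Lt 0 2 3, Jz 0 31, Const 0 2, Lt 0 2 0, Add 1 2 0, Add 1 1 0, Mul 0 0 3, Add 1 1 0, Const 0 3,
     Add 1 1 0, Load 0 1, Const 1 2, Lt 0 0 1, Add 4 4 0, Const 1 1, Add 2 2 1, Jmp 14, Halt]"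

lemma init_prog_prologue:
  assumes "n + 6 < 2 ^ w" "M 0 = n"
  shows "\<exists>M'. (step init_prog w ^^ 14) (0, M) = (14, M') \<and> M' 3 = n \<and> M' 2 = 0 \<and> M' 4 = 0 \<and>
     M' (n + 5) = M 3 \<and> M' (n + 6) = M 4 \<and> (\<forall>x. 5 \<le> x \<longrightarrow> x \<noteq> n + 5 \<longrightarrow> x \<noteq> n + 6 \<longrightarrow> M' x = M x)"
  using assms by (simp add: run_simps init_prog_def)

lemma init_prog_iteration:
  assumes "n + 6 < 2 ^ w" "M 3 = n" "M 2 = i" "i < n" "M 4 \<le> i"
    and letter: "M (word_cell n i) = 1 \<or> M (word_cell n i) = 2"
  shows "\<exists>M'. (step init_prog w ^^ 17) (14, M) = (14, M') \<and> M' 3 = n \<and> M' 2 = Suc i \<and>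
     M' 4 = M 4 + (if M (word_cell n i) = 1 then 1 else 0) \<and> (\<forall>x. 5 \<le> x \<longrightarrow> M' x = M x)"
proof -
  have "0 < w"
    using assms(1) by (cases w) auto
  show ?thesis
  proof (cases "i < 2")
    case True
    then have cell: "word_cell n i = n + 5 + i"
      by (simp add: word_cell_def)
    show ?thesis
      using assms True \<open>0 < w\<close> unfolding cell
      by (elim disjE; simp add: run_simps init_prog_def
          add.assoc add.commute add.left_commute)
  next
    case False
    then have cell: "word_cell n i = 3 + i"
      by (simp add: word_cell_def)
    show ?thesis
      using assms False \<open>0 < w\<close> unfolding cell
      by (elim disjE; simp add: run_simps init_prog_def
          add.assoc add.commute add.left_commute)
  qed
qed

lemma init_prog_exit:
  assumes "n + 6 < 2 ^ w" "M 3 = n" "M 2 = n"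
  shows "\<exists>M'. (step init_prog w ^^ 2) (14, M) = (31, M') \<and> (\<forall>x. 1 \<le> x \<longrightarrow> M' x = M x)"
  using assms by (simp add: run_simps init_prog_def)

lemma init_prog_loop:
  assumes "n + 6 < 2 ^ w" "length u = n" "set u \<subseteq> {1, 2}"
  shows "i \<le> n \<Longrightarrow> M 3 = n \<Longrightarrow> M 2 = i \<Longrightarrow> M 4 = count_list (take i u) 1 \<Longrightarrow>
    \<forall>j<n. M (word_cell n j) = u ! j \<Longrightarrow>
    \<exists>M'. (step init_prog w ^^ (17 * (n - i) + 2)) (14, M) = (31, M') \<and>
      M' 3 = n \<and> M' 4 = count_list u 1 \<and> (\<forall>x\<ge>5. M' x = M x)"
proof (induction "n - i" arbitrary: i M)
  case 0
  then have "i = n"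
    by simp
  with 0 obtain M' where "(step init_prog w ^^ 2) (14, M) = (31, M')" "\<forall>x. 1 \<le> x \<longrightarrow> M' x = M x"
    using init_prog_exit[OF assms(1)] by blast
  moreover have "17 * (n - i) + 2 = 2"
    using \<open>i = n\<close> by simp
  ultimately have "(step init_prog w ^^ (17 * (n - i) + 2)) (14, M) = (31, M')"
    by (simp only:)
  then show ?case
    using 0 \<open>i = n\<close> assms(2) \<open>\<forall>x. 1 \<le> x \<longrightarrow> M' x = M x\<close> by auto
next
  case (Suc k)
  then have "i < n"
    by simp
  then have "u ! i \<in> set u" "M (word_cell n i) = u ! i"
    using Suc.prems(5) assms(2) by auto
  then have letter: "M (word_cell n i) = 1 \<or> M (word_cell n i) = 2"
    using assms(3) by auto
  have "M 4 \<le> i"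
    using Suc.prems(4) count_le_length[of "take i u" 1] \<open>i < n\<close> assms(2) by simp
  with Suc.prems letter obtain M1 where iteration: "(step init_prog w ^^ 17) (14, M) = (14, M1)"
    "M1 3 = n" "M1 2 = Suc i" "M1 4 = M 4 + (if M (word_cell n i) = 1 then 1 else 0)"
    "\<forall>x. 5 \<le> x \<longrightarrow> M1 x = M x"
    using init_prog_iteration[OF assms(1) _ _ \<open>i < n\<close>] by blast
  have count: "M1 4 = count_list (take (Suc i) u) 1"
    using iteration(4) Suc.prems(4) \<open>M (word_cell n i) = u ! i\<close> count_list_take_Suc[of i u 1]
      \<open>i < n\<close> assms(2) by simp
  have word: "\<forall>j<n. M1 (word_cell n j) = u ! j"
    using iteration(5) Suc.prems(5) word_cell_ge by simp
  have "k = n - Suc i" "Suc i \<le> n"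
    using Suc.hyps(2) \<open>i < n\<close> by simp_all
  then obtain M' where "(step init_prog w ^^ (17 * (n - Suc i) + 2)) (14, M1) = (31, M')"
    "M' 3 = n" "M' 4 = count_list u 1" "\<forall>x\<ge>5. M' x = M1 x"
    using Suc.hyps(1)[OF _ _ iteration(2,3) count word] by blast
  moreover have "17 * (n - i) + 2 = (17 * (n - Suc i) + 2) + 17"
    using \<open>i < n\<close> by simp
  ultimately show ?case
    using iteration(1,5) by (auto simp only: funpow_add o_apply)
qed

lemma init_prog_correct:
  assumes "n + 6 < 2 ^ w" "length u = n" "set u \<subseteq> {1, 2}"
  shows "\<exists>M. runs_in init_prog w (init_mem u) (17 * n + 16) M \<and> represents n u M"
proof -
  have "init_mem u 0 = n"
    using assms(2) by (simp add: init_mem_def)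
  then obtain M1 where prologue: "(step init_prog w ^^ 14) (0, init_mem u) = (14, M1)"
    "M1 3 = n" "M1 2 = 0" "M1 4 = 0" "M1 (n + 5) = init_mem u 3" "M1 (n + 6) = init_mem u 4"
    "\<forall>x. 5 \<le> x \<longrightarrow> x \<noteq> n + 5 \<longrightarrow> x \<noteq> n + 6 \<longrightarrow> M1 x = init_mem u x"
    using init_prog_prologue[OF assms(1)] by blast
  have "M1 (word_cell n j) = u ! j" if "j < n" for j
  proof -
    consider "j = 0" | "j = 1" | "2 \<le> j"
      by linarith
    then show ?thesis
      using prologue(5-7) that assms(2) by cases (auto simp: word_cell_def init_mem_def add.commute)
  qed
  then obtain M where loop: "(step init_prog w ^^ (17 * n + 2)) (14, M1) = (31, M)"
    "M 3 = n" "M 4 = count_list u 1" "\<forall>x\<ge>5. M x = M1 x"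
    using init_prog_loop[OF assms, of 0 M1] prologue(2-4) by auto
  have "17 * n + 16 = (17 * n + 2) + 14"
    by simp
  then have "(step init_prog w ^^ (17 * n + 16)) (0, init_mem u) = (31, M)"
    using prologue(1) loop(1) by (simp only: funpow_add o_apply)
  from runs_in_if_halted_within[OF this] have "runs_in init_prog w (init_mem u) (17 * n + 16) M"
    by (simp add: halted_def init_prog_def)
  moreover have "represents n u M"
    using loop(2-4) assms(2,3) \<open>\<And>j. j < n \<Longrightarrow> M1 (word_cell n j) = u ! j\<close> word_cell_ge
    by (simp add: represents_def)
  ultimately show ?thesis
    by blast
qed

lemma serve_if_invariant:
  assumes update: "\<And>M u i a. invar u M \<Longrightarrow> i < n \<Longrightarrow> a \<in> {1, 2} \<Longrightarrow>
      \<exists>M'. runs_in Pu w (M(1 := i, 2 := a)) c M' \<and> invar (u[i := a]) M'"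
    and query: "\<And>M u. invar u M \<Longrightarrow> \<exists>M'. runs_in Pq w M c M' \<and> (M' 0 \<noteq> 0 \<longleftrightarrow> DF2 u) \<and> invar u M'"
  shows "invar u M \<Longrightarrow> \<forall>o' \<in> set ops. valid_op n o' \<Longrightarrow> serve Pu Pq w M u ops (c * length ops)"
proof (induction ops arbitrary: M u)
  case Nil
  then show ?case
    by (simp add: serve_nil)
next
  case (Cons o' ops)
  show ?case
  proof (cases o')
    case (Upd i a)
    with Cons.prems have "i < n" "a \<in> {1, 2}"
      by (auto simp: valid_op_def)
    with Cons.prems(1) obtain M' where
      "runs_in Pu w (M(1 := i, 2 := a)) c M'" "invar (u[i := a]) M'"
      using update by blast
    with Cons show ?thesis
      using serve_upd[of Pu w M i a c M' Pq] Upd by simp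
  next
    case Qry
    from Cons.prems(1) obtain M' where "runs_in Pq w M c M'" "M' 0 \<noteq> 0 \<longleftrightarrow> DF2 u" "invar u M'"
      using query by blast
    with Cons show ?thesis
      using serve_qry[of Pq w M c M' u Pu] Qry by simp
  qed
qed

theorem lemma33:
  shows "\<exists>(Pi :: instr list) (Pu :: instr list) (Pq :: instr list) (c :: nat) (d :: nat).
    \<forall>(n :: nat) (w :: nat) (u :: nat list) (ops :: op list).
      d * (n + 1) \<le> 2 ^ w \<longrightarrow> length u = n \<longrightarrow> set u \<subseteq> {1, 2} \<longrightarrow>
      (\<forall>o' \<in> set ops. valid_op n o') \<longrightarrow>
      (\<exists>t0 M0 T. runs_in Pi w (init_mem u) t0 M0 \<and> serve Pu Pq w M0 u ops T \<and>
                 t0 + T \<le> c * (n + length ops + 1))"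
proof -
  have "\<exists>t0 M0 T. runs_in init_prog w (init_mem u) t0 M0 \<and>
      serve update_prog query_prog w M0 u ops T \<and> t0 + T \<le> 40 * (n + length ops + 1)"
    if bound: "7 * (n + 1) \<le> 2 ^ w" and word: "length u = n" "set u \<subseteq> {1, 2}"
      and valid: "\<forall>o' \<in> set ops. valid_op n o'" for n w u ops
  proof -
    have width: "n + 6 < 2 ^ w"
      using bound less_le_trans[of "n + 6" "7 * (n + 1)"] by simp
    then obtain M0 where "runs_in init_prog w (init_mem u) (17 * n + 16) M0" "represents n u M0"
      using init_prog_correct word by blast
    moreover have "serve update_prog query_prog w M0 u ops (40 * length ops)"
      using serve_if_invariant[OF update_prog_correct[OF width] query_prog_correct[OF width]]
        \<open>represents n u M0\<close> valid by blast
    moreover have "17 * n + 16 + 40 * length ops \<le> 40 * (n + length ops + 1)"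
      by simp
    ultimately show ?thesis
      by blast
  qed
  then show ?thesis
    by blast
qed

end
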